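(* Let $n\ge 3$, let $a<b<c$ be elements of $\mathcal{C}_n$ and let $k$ be an integer with $a+1\le k\le b$. Then the semiring $\mathcal{L}^{k}_{a}\left(\triangle^{(n)}\{a,b,c\}\right)=\{a_kb_{n-k-i}c_i:\ 0\le i\le n-k\}$ is isomorphic to the string $\mathcal{STR}^{(n-k)}\{b-k,c-k\}$.
   Context: For $N\ge1$, $\mathcal{C}_N=\{0,1,\dots,N-1\}$ with its usual order; $\widehat{\mathcal{E}}_{\mathcal{C}_N}$ is the set of all order-preserving maps $\mathcal{C}_N\to\mathcal{C}_N$ (not required to fix $0$), a semiring with $(\alpha+\beta)(x)=\max(\alpha(x),\beta(x))$ and $(\alpha\cdot\beta)(x)=\beta(\alpha(x))$. The notation $a_kb_\ell c_m$ (with $k+\ell+m=N$) denotes the map sending $0,\dots,k-1$ to $a$, the next $\ell$ elements to $b$ and the last $m$ to $c$. The triangle $\triangle^{(n)}\{a,b,c\}$ is the set of $\alpha\in\widehat{\mathcal{E}}_{\mathcal{C}_n}$ with image in $\{a,b,c\}$; its layer $\mathcal{L}^{k}_{a}$ is the set of elements mapping exactly $k$ elements to $a$ (a subsemiring for $a+1\le k\le b$). For $x<y$ in $\mathcal{C}_N$, the string $\mathcal{STR}^{(N)}\{x,y\}$ is the subsemiring of $\widehat{\mathcal{E}}_{\mathcal{C}_N}$ of maps with image in $\{x,y\}$. Isomorphism means semiring isomorphism (bijection preserving $+$ and $\cdot$). *)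

theory Defs
  imports Main
begin

text \<open>Maps C_N -> C_N are represented as functions nat => nat which vanish
  outside {0..<N} (extensional representation).\<close>

definition OP :: "nat \<Rightarrow> (nat \<Rightarrow> nat) set" where
  "OP N = {f. (\<forall>x<N. f x < N) \<and> (\<forall>x y. x \<le> y \<and> y < N \<longrightarrow> f x \<le> f y)
              \<and> (\<forall>x. N \<le> x \<longrightarrow> f x = 0)}"

definition padd :: "nat \<Rightarrow> (nat \<Rightarrow> nat) \<Rightarrow> (nat \<Rightarrow> nat) \<Rightarrow> nat \<Rightarrow> nat" where
  "padd N f g = (\<lambda>x. if x < N then max (f x) (g x) else 0)"

definition pmul :: "nat \<Rightarrow> (nat \<Rightarrow> nat) \<Rightarrow> (nat \<Rightarrow> nat) \<Rightarrow> nat \<Rightarrow> nat" where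
  "pmul N f g = (\<lambda>x. if x < N then g (f x) else 0)"

definition triangle :: "nat \<Rightarrow> nat \<Rightarrow> nat \<Rightarrow> nat \<Rightarrow> (nat \<Rightarrow> nat) set" where
  "triangle n a b c = {f \<in> OP n. \<forall>x<n. f x \<in> {a, b, c}}"

definition layer :: "nat \<Rightarrow> nat \<Rightarrow> nat \<Rightarrow> nat \<Rightarrow> nat \<Rightarrow> (nat \<Rightarrow> nat) set" where
  "layer n a b c k = {f \<in> triangle n a b c. card {x. x < n \<and> f x = a} = k}"

definition STRG :: "nat \<Rightarrow> nat \<Rightarrow> nat \<Rightarrow> (nat \<Rightarrow> nat) set" where
  "STRG N x y = {f \<in> OP N. \<forall>z<N. f z \<in> {x, y}}"

text \<open>The map a_k b_l c_m on C_N (m = N - k - l).\<close>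
definition abc :: "nat \<Rightarrow> nat \<Rightarrow> nat \<Rightarrow> nat \<Rightarrow> nat \<Rightarrow> nat \<Rightarrow> nat \<Rightarrow> nat" where
  "abc N a b c k l = (\<lambda>x. if x < k then a else if x < k + l then b else if x < N then c else 0)"

definition semiring_iso ::
  "'a set \<Rightarrow> ('a \<Rightarrow> 'a \<Rightarrow> 'a) \<Rightarrow> ('a \<Rightarrow> 'a \<Rightarrow> 'a) \<Rightarrow>
   'b set \<Rightarrow> ('b \<Rightarrow> 'b \<Rightarrow> 'b) \<Rightarrow> ('b \<Rightarrow> 'b \<Rightarrow> 'b) \<Rightarrow> ('a \<Rightarrow> 'b) \<Rightarrow> bool" where
  "semiring_iso A addA mulA B addB mulB \<phi> \<longleftrightarrow>
     bij_betw \<phi> A B \<and>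
     (\<forall>x\<in>A. \<forall>y\<in>A. \<phi> (addA x y) = addB (\<phi> x) (\<phi> y) \<and> \<phi> (mulA x y) = mulB (\<phi> x) (\<phi> y))"

end

theory Submission
  imports Defs
begin

text \<open>Monotonicity forces the preimage of the least value to be an initial segment of
  \<open>{0..<n}\<close>. Hence an element of the layer is constantly \<open>a\<close> on \<open>{0..<k}\<close> and takes only
  the values \<open>b\<close>, \<open>c\<close> on \<open>{k..<n}\<close>, where it is a step function. Restricting to \<open>{k..<n}\<close> and
  shifting argument and value down by \<open>k\<close> maps the layer bijectively onto the string
  \<open>STRG (n - k) (b - k) (c - k)\<close>. The shift commutes with pointwise maxima, and with
  composition because every value taken on \<open>{k..<n}\<close> is again a point of \<open>{k..<n}\<close>.\<close>

lemma downward_closed_eq_lessThan_card: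
  fixes S :: "nat set"
  assumes "finite S" and down: "\<And>x y. x \<le> y \<Longrightarrow> y \<in> S \<Longrightarrow> x \<in> S"
  shows "S = {..<card S}"
proof (intro set_eqI iffI)
  fix x assume "x \<in> S"
  then have "{..x} \<subseteq> S" using down by auto
  then have "card {..x} \<le> card S" using \<open>finite S\<close> by (rule card_mono[rotated])
  then show "x \<in> {..<card S}" by simp
next
  fix x assume x: "x \<in> {..<card S}"
  show "x \<in> S"
  proof (rule ccontr)
    assume "x \<notin> S"
    then have "S \<subseteq> {..<x}" using down by (meson lessThan_iff not_le subsetI)
    then have "card S \<le> x" using card_mono[of "{..<x}" S] by simp
    with x show False by simp
  qed
qed

lemma OP_min_fiber_eq_lessThan:
  assumes f: "f \<in> OP n" and min: "\<And>x. x < n \<Longrightarrow> a \<le> f x"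
  shows "{x. x < n \<and> f x = a} = {..<card {x. x < n \<and> f x = a}}"
proof (rule downward_closed_eq_lessThan_card)
  fix x y assume "x \<le> y" "y \<in> {x. x < n \<and> f x = a}"
  moreover from this have "f x \<le> f y" using f by (auto simp: OP_def)
  ultimately show "x \<in> {x. x < n \<and> f x = a}" using min[of x] by auto
qed simp

lemma STRG_step_function:
  assumes h: "h \<in> STRG N x y" and "x < y"
  shows "\<exists>j\<le>N. h = (\<lambda>z. if z < j then x else if z < N then y else 0)"
proof -
  define j where "j = card {z. z < N \<and> h z = x}"
  have vals: "\<And>z. z < N \<Longrightarrow> h z = x \<or> h z = y" and op: "h \<in> OP N"
    using h by (auto simp: STRG_def)
  have fiber: "{z. z < N \<and> h z = x} = {..<j}"
    unfolding j_def
  proof (rule OP_min_fiber_eq_lessThan[OF op])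
    show "x \<le> h z" if "z < N" for z using vals[OF that] \<open>x < y\<close> by auto
  qed
  have "j \<le> N" unfolding j_def using card_mono[of "{..<N}" "{z. z < N \<and> h z = x}"] by auto
  moreover have "h z = (if z < j then x else if z < N then y else 0)" for z
    using fiber vals[of z] op \<open>j \<le> N\<close> by (auto simp: OP_def set_eq_iff)
  ultimately show ?thesis by blast
qed

lemma layer_iff:
  assumes "a < b" "b < c" "k \<le> n"
  shows "f \<in> layer n a b c k \<longleftrightarrow>
    f \<in> OP n \<and> (\<forall>x<k. f x = a) \<and> (\<forall>x. k \<le> x \<and> x < n \<longrightarrow> f x \<in> {b, c})"
proof
  assume f: "f \<in> layer n a b c k"
  then have op: "f \<in> OP n" and vals: "\<forall>x<n. f x \<in> {a, b, c}"
    and card: "card {x. x < n \<and> f x = a} = k"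
    by (auto simp: layer_def triangle_def)
  have "{x. x < n \<and> f x = a} = {..<k}"
    using OP_min_fiber_eq_lessThan[OF op, of a] vals assms card by fastforce
  then have "x < n \<Longrightarrow> f x = a \<longleftrightarrow> x < k" for x by blast
  with vals \<open>k \<le> n\<close> show "f \<in> OP n \<and> (\<forall>x<k. f x = a) \<and> (\<forall>x. k \<le> x \<and> x < n \<longrightarrow> f x \<in> {b, c})"
    using op by auto
next
  assume "f \<in> OP n \<and> (\<forall>x<k. f x = a) \<and> (\<forall>x. k \<le> x \<and> x < n \<longrightarrow> f x \<in> {b, c})"
  then have op: "f \<in> OP n" and low: "\<forall>x<k. f x = a" and high: "\<forall>x. k \<le> x \<and> x < n \<longrightarrow> f x \<in> {b, c}"
    by auto
  have "{x. x < n \<and> f x = a} = {..<k}"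
    using low high assms by (auto simp: not_less)
  moreover have "\<forall>x<n. f x \<in> {a, b, c}" using low high by (metis insertCI not_le)
  ultimately show "f \<in> layer n a b c k" using op by (simp add: layer_def triangle_def)
qed

definition shift_down :: "nat \<Rightarrow> nat \<Rightarrow> (nat \<Rightarrow> nat) \<Rightarrow> nat \<Rightarrow> nat" where
  "shift_down n k f = (\<lambda>x. if x < n - k then f (x + k) - k else 0)"

definition shift_up :: "nat \<Rightarrow> nat \<Rightarrow> nat \<Rightarrow> (nat \<Rightarrow> nat) \<Rightarrow> nat \<Rightarrow> nat" where
  "shift_up n k a h = (\<lambda>x. if x < k then a else if x < n then h (x - k) + k else 0)"

context
  fixes n a b c k :: nat
  assumes abc: "a < b" "b < c" "c < n" and k: "k \<le> b"
begin

lemma layer_values_on_tail: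
  assumes "f \<in> layer n a b c k" "k \<le> x" "x < n"
  shows "f x \<in> {b, c}" "k \<le> f x" "f x < n"
  using assms layer_iff[of a b c k n] abc k by auto

lemma shift_down_in_STRG:
  assumes f: "f \<in> layer n a b c k"
  shows "shift_down n k f \<in> STRG (n - k) (b - k) (c - k)"
proof -
  have "f (x + k) \<le> f (y + k)" if "x \<le> y" "y < n - k" for x y
    using f that layer_iff[of a b c k n] abc k by (auto simp: OP_def)
  moreover have "f (x + k) \<in> {b, c}" if "x < n - k" for x
    using layer_values_on_tail[OF f, of "x + k"] that by simp
  ultimately show ?thesis
    using abc k by (fastforce simp: STRG_def OP_def shift_down_def)
qed

lemma shift_up_in_layer:
  assumes h: "h \<in> STRG (n - k) (b - k) (c - k)"
  shows "shift_up n k a h \<in> layer n a b c k"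
proof -
  have vals: "h (x - k) + k \<in> {b, c}" if "k \<le> x" "x < n" for x
  proof -
    have "x - k < n - k" using that by simp
    then have "h (x - k) \<in> {b - k, c - k}" using h by (simp add: STRG_def)
    then show ?thesis using abc k by auto
  qed
  have mono: "h (x - k) \<le> h (y - k)" if "x \<le> y" "y < n" for x y
  proof -
    have "x - k \<le> y - k" "y - k < n - k" using that abc k by auto
    then show ?thesis using h by (simp add: STRG_def OP_def)
  qed
  have "shift_up n k a h \<in> OP n"
    unfolding OP_def mem_Collect_eq
  proof (intro conjI allI impI)
    fix x assume "x < n"
    then show "shift_up n k a h x < n"
      using vals[of x] abc by (auto simp: shift_up_def)
  next
    fix x y assume xy: "x \<le> y \<and> y < n"
    show "shift_up n k a h x \<le> shift_up n k a h y"
    proof (cases "y < k")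
      case False
      then have "a \<le> h (y - k) + k" using vals[of y] xy abc by auto
      then show ?thesis using False xy mono[of x y] by (simp add: shift_up_def)
    qed (use xy in \<open>simp add: shift_up_def\<close>)
  qed (use abc k in \<open>simp add: shift_up_def\<close>)
  then show ?thesis
    using vals by (subst layer_iff[OF abc(1,2)]) (use abc k in \<open>auto simp: shift_up_def\<close>)
qed

lemma shift_down_shift_up:
  assumes "h \<in> STRG (n - k) (b - k) (c - k)"
  shows "shift_down n k (shift_up n k a h) = h"
  using assms by (auto simp: STRG_def OP_def shift_down_def shift_up_def)

lemma shift_up_shift_down:
  assumes f: "f \<in> layer n a b c k"
  shows "shift_up n k a (shift_down n k f) = f"
proof
  fix x
  have "f \<in> OP n" "\<forall>x<k. f x = a" using f layer_iff[of a b c k n] abc k by auto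
  then show "shift_up n k a (shift_down n k f) x = f x"
    using layer_values_on_tail(2)[OF f, of x]
    by (auto simp: OP_def shift_up_def shift_down_def)
qed

lemma shift_down_pmul:
  assumes "f \<in> layer n a b c k"
  shows "shift_down n k (pmul n f g) = pmul (n - k) (shift_down n k f) (shift_down n k g)"
proof
  fix x
  show "shift_down n k (pmul n f g) x = pmul (n - k) (shift_down n k f) (shift_down n k g) x"
    using layer_values_on_tail(2,3)[OF assms, of "x + k"]
    by (auto simp: shift_down_def pmul_def)
qed

lemma layer_iso_STRG:
  "semiring_iso (layer n a b c k) (padd n) (pmul n)
     (STRG (n - k) (b - k) (c - k)) (padd (n - k)) (pmul (n - k)) (shift_down n k)"
proof -
  have "bij_betw (shift_down n k) (layer n a b c k) (STRG (n - k) (b - k) (c - k))"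
    by (rule bij_betw_byWitness[where f' = "shift_up n k a"])
       (auto simp: shift_up_shift_down shift_down_shift_up shift_down_in_STRG shift_up_in_layer)
  moreover have "shift_down n k (padd n f g) = padd (n - k) (shift_down n k f) (shift_down n k g)"
    for f g by (auto simp: shift_down_def padd_def max_def)
  ultimately show ?thesis by (simp add: semiring_iso_def shift_down_pmul)
qed

lemma layer_eq_abc:
  "layer n a b c k = {abc n a b c k (n - k - i) | i. i \<le> n - k}"
proof (intro set_eqI iffI)
  fix f assume f: "f \<in> layer n a b c k"
  have "b - k < c - k" using abc k by simp
  then obtain j where "j \<le> n - k"
    and step: "shift_down n k f = (\<lambda>z. if z < j then b - k else if z < n - k then c - k else 0)"
    using STRG_step_function[OF shift_down_in_STRG[OF f]] by blast
  have "f = shift_up n k a (shift_down n k f)" using shift_up_shift_down[OF f] by simp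
  also have "\<dots> = abc n a b c k j"
  proof
    fix x
    show "shift_up n k a (shift_down n k f) x = abc n a b c k j x"
      unfolding step using abc k \<open>j \<le> n - k\<close> by (auto simp: shift_up_def abc_def)
  qed
  finally have "f = abc n a b c k j" .
  moreover have "j = n - k - (n - k - j)" using \<open>j \<le> n - k\<close> by simp
  ultimately show "f \<in> {abc n a b c k (n - k - i) | i. i \<le> n - k}"
    by (metis (mono_tags, lifting) diff_le_self mem_Collect_eq)
next
  fix f assume "f \<in> {abc n a b c k (n - k - i) | i. i \<le> n - k}"
  then obtain i where f: "f = abc n a b c k (n - k - i)" by blast
  have "f \<in> OP n" using abc k unfolding f OP_def abc_def by auto
  moreover have "f x = a" if "x < k" for x using that by (simp add: f abc_def)
  moreover have "f x \<in> {b, c}" if "k \<le> x" "x < n" for x using that by (simp add: f abc_def)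
  ultimately show "f \<in> layer n a b c k"
    using layer_iff[OF abc(1,2)] abc k by simp
qed

end

theorem proposition28:
  fixes n a b c k :: nat
  assumes "n \<ge> 3" and "a < b" and "b < c" and "c < n"
    and "a + 1 \<le> k" and "k \<le> b"
  shows "layer n a b c k = {abc n a b c k (n - k - i) | i. i \<le> n - k}
    \<and> (\<exists>\<phi>. semiring_iso (layer n a b c k) (padd n) (pmul n)
              (STRG (n - k) (b - k) (c - k)) (padd (n - k)) (pmul (n - k)) \<phi>)"
  using layer_eq_abc[OF assms(2-4,6)] layer_iso_STRG[OF assms(2-4,6)] by blast

end
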